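(* Let $F\colon\mathbf{A}\to\mathbf{C}$ be a discrete opfibration and $J\colon\mathbf{A}\to\mathbf{B}$ a cosieve between small categories, and let $\bar F\colon\mathbf{B}\to\mathbf{D}$, $\bar J\colon\mathbf{C}\to\mathbf{D}$ be a pushout of $J$ and $F$ in $\mathbf{Cat}$ (so $\bar F\circ J=\bar J\circ F$). Then $\bar F$ is a discrete opfibration.
   Context: $\mathbf{Cat}$ is the category of small categories and functors. A functor $F\colon\mathbf{A}\to\mathbf{B}$ is a discrete opfibration if for each object $A$ of $\mathbf{A}$ and each morphism $b$ of $\mathbf{B}$ with domain $FA$ there is a unique morphism $a$ of $\mathbf{A}$ with domain $A$ and $Fa=b$. A cosieve is an injective-on-objects discrete opfibration. *)

theory Defs
  imports Main
begin

text \<open>A small category: a set of objects, a set of morphisms, domain, codomain,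
  identities and composition (Comp C g f is g after f, meaningful when Cod f = Dom g).
  Smallness is automatic: objects and morphisms form sets.\<close>

record ('o, 'm) cat =
  Obj  :: "'o set"
  Arr  :: "'m set"
  Dom  :: "'m \<Rightarrow> 'o"
  Cod  :: "'m \<Rightarrow> 'o"
  Id   :: "'o \<Rightarrow> 'm"
  Comp :: "'m \<Rightarrow> 'm \<Rightarrow> 'm"

definition category :: "('o, 'm) cat \<Rightarrow> bool" where
  "category C \<longleftrightarrow>
     (\<forall>f\<in>Arr C. Dom C f \<in> Obj C \<and> Cod C f \<in> Obj C) \<and>
     (\<forall>x\<in>Obj C. Id C x \<in> Arr C \<and> Dom C (Id C x) = x \<and> Cod C (Id C x) = x) \<and>
     (\<forall>f\<in>Arr C. \<forall>g\<in>Arr C. Cod C f = Dom C g \<longrightarrow>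
        Comp C g f \<in> Arr C \<and> Dom C (Comp C g f) = Dom C f \<and> Cod C (Comp C g f) = Cod C g) \<and>
     (\<forall>f\<in>Arr C. Comp C f (Id C (Dom C f)) = f \<and> Comp C (Id C (Cod C f)) f = f) \<and>
     (\<forall>f\<in>Arr C. \<forall>g\<in>Arr C. \<forall>h\<in>Arr C. Cod C f = Dom C g \<longrightarrow> Cod C g = Dom C h \<longrightarrow>
        Comp C h (Comp C g f) = Comp C (Comp C h g) f)"

text \<open>A functor is a pair (object map, morphism map); only its values on the
  carriers matter.\<close>

type_synonym ('o1, 'm1, 'o2, 'm2) cfunctor = "('o1 \<Rightarrow> 'o2) \<times> ('m1 \<Rightarrow> 'm2)"

definition is_functor ::
  "('o1, 'm1) cat \<Rightarrow> ('o2, 'm2) cat \<Rightarrow> ('o1, 'm1, 'o2, 'm2) cfunctor \<Rightarrow> bool" where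
  "is_functor C D F \<longleftrightarrow> category C \<and> category D \<and>
     (\<forall>x\<in>Obj C. fst F x \<in> Obj D) \<and>
     (\<forall>f\<in>Arr C. snd F f \<in> Arr D \<and> Dom D (snd F f) = fst F (Dom C f)
                                 \<and> Cod D (snd F f) = fst F (Cod C f)) \<and>
     (\<forall>x\<in>Obj C. snd F (Id C x) = Id D (fst F x)) \<and>
     (\<forall>f\<in>Arr C. \<forall>g\<in>Arr C. Cod C f = Dom C g \<longrightarrow>
        snd F (Comp C g f) = Comp D (snd F g) (snd F f))"

definition discrete_opfibration ::
  "('o1, 'm1) cat \<Rightarrow> ('o2, 'm2) cat \<Rightarrow> ('o1, 'm1, 'o2, 'm2) cfunctor \<Rightarrow> bool" where
  "discrete_opfibration A B F \<longleftrightarrow> is_functor A B F \<and>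
     (\<forall>x\<in>Obj A. \<forall>b\<in>Arr B. Dom B b = fst F x \<longrightarrow>
        (\<exists>!a. a \<in> Arr A \<and> Dom A a = x \<and> snd F a = b))"

definition cosieve ::
  "('o1, 'm1) cat \<Rightarrow> ('o2, 'm2) cat \<Rightarrow> ('o1, 'm1, 'o2, 'm2) cfunctor \<Rightarrow> bool" where
  "cosieve A B J \<longleftrightarrow> discrete_opfibration A B J \<and> inj_on (fst J) (Obj A)"

definition cocone ::
  "('ao, 'am) cat \<Rightarrow> ('bo, 'bm) cat \<Rightarrow> ('co, 'cm) cat \<Rightarrow> ('eo, 'em) cat \<Rightarrow>
   ('ao, 'am, 'bo, 'bm) cfunctor \<Rightarrow> ('ao, 'am, 'co, 'cm) cfunctor \<Rightarrow>
   ('bo, 'bm, 'eo, 'em) cfunctor \<Rightarrow> ('co, 'cm, 'eo, 'em) cfunctor \<Rightarrow> bool" where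
  "cocone A B C E J F G H \<longleftrightarrow> is_functor B E G \<and> is_functor C E H \<and>
     (\<forall>x\<in>Obj A. fst G (fst J x) = fst H (fst F x)) \<and>
     (\<forall>a\<in>Arr A. snd G (snd J a) = snd H (snd F a))"

text \<open>Universal property of the pushout square, tested against all cocones whose
  vertex is a category with object type 'eo and morphism type 'em (selected by the
  TYPE argument). Mediating functors are unique as functors, i.e. on the carriers.\<close>

definition pushout_wrt ::
  "('ao, 'am) cat \<Rightarrow> ('bo, 'bm) cat \<Rightarrow> ('co, 'cm) cat \<Rightarrow> ('do, 'dm) cat \<Rightarrow>
   ('ao, 'am, 'bo, 'bm) cfunctor \<Rightarrow> ('ao, 'am, 'co, 'cm) cfunctor \<Rightarrow>
   ('bo, 'bm, 'do, 'dm) cfunctor \<Rightarrow> ('co, 'cm, 'do, 'dm) cfunctor \<Rightarrow>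
   ('eo \<times> 'em) itself \<Rightarrow> bool" where
  "pushout_wrt A B C D J F Fb Jb (_ :: ('eo \<times> 'em) itself) \<longleftrightarrow>
     is_functor A B J \<and> is_functor A C F \<and> cocone A B C D J F Fb Jb \<and>
     (\<forall>(E :: ('eo, 'em) cat) G H. cocone A B C E J F G H \<longrightarrow>
        (\<exists>K. is_functor D E K \<and>
             (\<forall>y\<in>Obj B. fst K (fst Fb y) = fst G y) \<and> (\<forall>b\<in>Arr B. snd K (snd Fb b) = snd G b) \<and>
             (\<forall>z\<in>Obj C. fst K (fst Jb z) = fst H z) \<and> (\<forall>c\<in>Arr C. snd K (snd Jb c) = snd H c) \<and>
             (\<forall>K'. is_functor D E K' \<and>
                (\<forall>y\<in>Obj B. fst K' (fst Fb y) = fst G y) \<and> (\<forall>b\<in>Arr B. snd K' (snd Fb b) = snd G b) \<and>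
                (\<forall>z\<in>Obj C. fst K' (fst Jb z) = fst H z) \<and> (\<forall>c\<in>Arr C. snd K' (snd Jb c) = snd H c)
                \<longrightarrow> (\<forall>x\<in>Obj D. fst K' x = fst K x) \<and> (\<forall>h\<in>Arr D. snd K' h = snd K h))))"

text \<open>HOL cannot quantify over all types, so the universal property is
  required for cocones into categories of D's own types and into categories with
  objects of type ('bo + 'co) set and morphisms of type ('bm + 'cm) list set; the
  standard construction of the pushout (classes of objects of B + C, classes of
  composable paths of morphisms of B + C) lives in the latter, so these two
  conditions together characterise D exactly as a pushout (up to isomorphism).\<close>

definition is_pushout ::
  "('ao, 'am) cat \<Rightarrow> ('bo, 'bm) cat \<Rightarrow> ('co, 'cm) cat \<Rightarrow> ('do, 'dm) cat \<Rightarrow>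
   ('ao, 'am, 'bo, 'bm) cfunctor \<Rightarrow> ('ao, 'am, 'co, 'cm) cfunctor \<Rightarrow>
   ('bo, 'bm, 'do, 'dm) cfunctor \<Rightarrow> ('co, 'cm, 'do, 'dm) cfunctor \<Rightarrow> bool" where
  "is_pushout A B C D J F Fb Jb \<longleftrightarrow>
     pushout_wrt A B C D J F Fb Jb TYPE('do \<times> 'dm) \<and>
     pushout_wrt A B C D J F Fb Jb TYPE(('bo + 'co) set \<times> ('bm + 'cm) list set)"

end

theory Submission
  imports Defs
begin

text \<open>Lifts along Fb are unique because of an explicit cocone: glue C onto B along the cosieve,
  keeping the objects of B outside J(A) and the arrows of B with domain outside J(A), and let an
  arrow c of C act on an arrow of B ending at J a by composing it with J applied to the F-lift of
  c at a. The functor from B to this glued category identifies no two arrows with a common domain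
  (F-lifts are unique), and by the universal property it factors through Fb.

  Lifts along Fb exist because the arrows of D that lift at every object over their domain form a
  wide subcategory containing the images of Jb (lift along F, then apply J) and of Fb (an arrow of
  B out of J(A) is the J-image of an arrow of A, so its Fb-image is a Jb-image), and a pushout
  has no proper wide subcategory containing the images of its legs.\<close>

lemma cat_dom: "category C \<Longrightarrow> f \<in> Arr C \<Longrightarrow> Dom C f \<in> Obj C"
  and cat_cod: "category C \<Longrightarrow> f \<in> Arr C \<Longrightarrow> Cod C f \<in> Obj C"
  and cat_id: "category C \<Longrightarrow> x \<in> Obj C \<Longrightarrow> Id C x \<in> Arr C"
  and cat_id_dom: "category C \<Longrightarrow> x \<in> Obj C \<Longrightarrow> Dom C (Id C x) = x"
  and cat_id_cod: "category C \<Longrightarrow> x \<in> Obj C \<Longrightarrow> Cod C (Id C x) = x"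
  and cat_idr: "category C \<Longrightarrow> f \<in> Arr C \<Longrightarrow> Comp C f (Id C (Dom C f)) = f"
  and cat_idl: "category C \<Longrightarrow> f \<in> Arr C \<Longrightarrow> Comp C (Id C (Cod C f)) f = f"
  by (simp_all add: category_def)

lemma cat_comp: "category C \<Longrightarrow> f \<in> Arr C \<Longrightarrow> g \<in> Arr C \<Longrightarrow> Cod C f = Dom C g \<Longrightarrow>
    Comp C g f \<in> Arr C"
  and cat_comp_dom: "category C \<Longrightarrow> f \<in> Arr C \<Longrightarrow> g \<in> Arr C \<Longrightarrow> Cod C f = Dom C g \<Longrightarrow>
    Dom C (Comp C g f) = Dom C f"
  and cat_comp_cod: "category C \<Longrightarrow> f \<in> Arr C \<Longrightarrow> g \<in> Arr C \<Longrightarrow> Cod C f = Dom C g \<Longrightarrow>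
    Cod C (Comp C g f) = Cod C g"
  by (simp_all add: category_def)

lemma cat_assoc: "category C \<Longrightarrow> f \<in> Arr C \<Longrightarrow> g \<in> Arr C \<Longrightarrow> h \<in> Arr C \<Longrightarrow>
    Cod C f = Dom C g \<Longrightarrow> Cod C g = Dom C h \<Longrightarrow>
    Comp C h (Comp C g f) = Comp C (Comp C h g) f"
  by (simp add: category_def)

lemma functor_cat_dom: "is_functor C D F \<Longrightarrow> category C"
  and functor_cat_cod: "is_functor C D F \<Longrightarrow> category D"
  and functor_obj: "is_functor C D F \<Longrightarrow> x \<in> Obj C \<Longrightarrow> fst F x \<in> Obj D"
  and functor_arr: "is_functor C D F \<Longrightarrow> f \<in> Arr C \<Longrightarrow> snd F f \<in> Arr D"
  and functor_dom: "is_functor C D F \<Longrightarrow> f \<in> Arr C \<Longrightarrow> Dom D (snd F f) = fst F (Dom C f)"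
  and functor_cod: "is_functor C D F \<Longrightarrow> f \<in> Arr C \<Longrightarrow> Cod D (snd F f) = fst F (Cod C f)"
  and functor_id: "is_functor C D F \<Longrightarrow> x \<in> Obj C \<Longrightarrow> snd F (Id C x) = Id D (fst F x)"
  by (simp_all add: is_functor_def)

lemma functor_comp: "is_functor C D F \<Longrightarrow> f \<in> Arr C \<Longrightarrow> g \<in> Arr C \<Longrightarrow> Cod C f = Dom C g \<Longrightarrow>
    snd F (Comp C g f) = Comp D (snd F g) (snd F f)"
  by (simp add: is_functor_def)

lemma is_functor_id: "category D \<Longrightarrow> is_functor D D (id, id)"
  by (simp add: is_functor_def cat_dom cat_cod cat_id)

lemma is_functor_wide_subcategory_iff:
  assumes "category D" "category (D\<lparr>Arr := S\<rparr>)" "S \<subseteq> Arr D"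
  shows "is_functor X (D\<lparr>Arr := S\<rparr>) K \<longleftrightarrow> is_functor X D K \<and> snd K ` Arr X \<subseteq> S"
  using assms unfolding is_functor_def by auto

lemma category_wide_subcategory:
  assumes D: "category D" and S: "S \<subseteq> Arr D"
    and id: "\<And>x. x \<in> Obj D \<Longrightarrow> Id D x \<in> S"
    and comp: "\<And>f g. f \<in> S \<Longrightarrow> g \<in> S \<Longrightarrow> Cod D f = Dom D g \<Longrightarrow> Comp D g f \<in> S"
  shows "category (D\<lparr>Arr := S\<rparr>)"
proof -
  have E: "Obj (D\<lparr>Arr := S\<rparr>) = Obj D" "Arr (D\<lparr>Arr := S\<rparr>) = S" "Dom (D\<lparr>Arr := S\<rparr>) = Dom D"
    "Cod (D\<lparr>Arr := S\<rparr>) = Cod D" "Id (D\<lparr>Arr := S\<rparr>) = Id D" "Comp (D\<lparr>Arr := S\<rparr>) = Comp D"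
    by simp_all
  show ?thesis
    unfolding category_def E
  proof (intro conjI ballI impI)
    fix f assume "f \<in> S"
    with S have f: "f \<in> Arr D" by blast
    show "Dom D f \<in> Obj D" "Cod D f \<in> Obj D" "Comp D f (Id D (Dom D f)) = f"
      "Comp D (Id D (Cod D f)) f = f"
      by (simp_all add: cat_dom cat_cod cat_idr cat_idl D f)
  next
    fix x assume x: "x \<in> Obj D"
    show "Id D x \<in> S" by (rule id[OF x])
    show "Dom D (Id D x) = x" "Cod D (Id D x) = x" by (simp_all add: cat_id_dom cat_id_cod D x)
  next
    fix f g assume fg: "f \<in> S" "g \<in> S" "Cod D f = Dom D g"
    with S have "f \<in> Arr D" "g \<in> Arr D" by blast+
    with fg show "Comp D g f \<in> S" "Dom D (Comp D g f) = Dom D f" "Cod D (Comp D g f) = Cod D g"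
      by (simp_all add: comp cat_comp_dom cat_comp_cod D)
  next
    fix f g h assume "f \<in> S" "g \<in> S" "h \<in> S" "Cod D f = Dom D g" "Cod D g = Dom D h"
    with S show "Comp D h (Comp D g f) = Comp D (Comp D h g) f"
      by (intro cat_assoc[OF D]) blast+
  qed
qed

section \<open>Discrete opfibrations\<close>

definition dopf_lift :: "('ao, 'am) cat \<Rightarrow> ('ao, 'am, 'co, 'cm) cfunctor \<Rightarrow> 'cm \<Rightarrow> 'ao \<Rightarrow> 'am" where
  "dopf_lift A F c a = (THE x. x \<in> Arr A \<and> Dom A x = a \<and> snd F x = c)"

context
  fixes A :: "('ao, 'am) cat" and C :: "('co, 'cm) cat" and F :: "('ao, 'am, 'co, 'cm) cfunctor"
  assumes dopf: "discrete_opfibration A C F"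
begin

lemma dopf_functor: "is_functor A C F"
  using dopf by (simp add: discrete_opfibration_def)

lemma dopf_ex1_lift:
  "a \<in> Obj A \<Longrightarrow> c \<in> Arr C \<Longrightarrow> Dom C c = fst F a \<Longrightarrow> \<exists>!x. x \<in> Arr A \<and> Dom A x = a \<and> snd F x = c"
  using dopf unfolding discrete_opfibration_def by blast

lemma dopf_lift:
  assumes "a \<in> Obj A" "c \<in> Arr C" "Dom C c = fst F a"
  shows "dopf_lift A F c a \<in> Arr A" "Dom A (dopf_lift A F c a) = a" "snd F (dopf_lift A F c a) = c"
  using theI'[OF dopf_ex1_lift[OF assms]] unfolding dopf_lift_def by blast+

lemma dopf_lift_eqI:
  assumes x: "x \<in> Arr A" and "Dom A x = a" "snd F x = c"
  shows "dopf_lift A F c a = x"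
proof -
  note F = dopf_functor
  have "\<exists>!y. y \<in> Arr A \<and> Dom A y = a \<and> snd F y = c"
    using dopf_ex1_lift[OF cat_dom[OF functor_cat_dom[OF F] x] functor_arr[OF F x] functor_dom[OF F x]]
      assms by simp
  then show ?thesis
    unfolding dopf_lift_def using assms by (simp add: the1_equality)
qed

lemma dopf_lift_id:
  assumes "a \<in> Obj A"
  shows "dopf_lift A F (Id C (fst F a)) a = Id A a"
  using assms by (intro dopf_lift_eqI) (simp_all add: cat_id cat_id_dom functor_id[OF dopf_functor]
      functor_cat_dom[OF dopf_functor])

lemma dopf_lift_comp:
  assumes a: "a \<in> Obj A" and c: "c1 \<in> Arr C" "c2 \<in> Arr C" "Dom C c1 = fst F a" "Cod C c1 = Dom C c2"
  defines "x1 \<equiv> dopf_lift A F c1 a"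
  shows "dopf_lift A F (Comp C c2 c1) a = Comp A (dopf_lift A F c2 (Cod A x1)) x1"
proof -
  note F = dopf_functor
  have catA: "category A" by (rule functor_cat_dom[OF F])
  note x1 = dopf_lift[OF a c(1,3), folded x1_def]
  have "Dom C c2 = fst F (Cod A x1)"
    using functor_cod[OF F x1(1)] x1(3) c(4) by simp
  note x2 = dopf_lift[OF cat_cod[OF catA x1(1)] c(2) this]
  let ?x2 = "dopf_lift A F c2 (Cod A x1)"
  have e: "Cod A x1 = Dom A ?x2" using x2(2) by simp
  show ?thesis
    by (rule dopf_lift_eqI)
      (simp_all add: cat_comp[OF catA x1(1) x2(1) e] cat_comp_dom[OF catA x1(1) x2(1) e]
        functor_comp[OF F x1(1) x2(1) e] x1(2,3) x2(3))
qed

end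

definition liftable_arrows ::
  "('bo, 'bm) cat \<Rightarrow> ('do, 'dm) cat \<Rightarrow> ('bo, 'bm, 'do, 'dm) cfunctor \<Rightarrow> 'dm set" where
  "liftable_arrows B D P =
     {d \<in> Arr D. \<forall>y\<in>Obj B. fst P y = Dom D d \<longrightarrow> (\<exists>b\<in>Arr B. Dom B b = y \<and> snd P b = d)}"

lemma liftable_arrowsI:
  "d \<in> Arr D \<Longrightarrow> (\<And>y. y \<in> Obj B \<Longrightarrow> fst P y = Dom D d \<Longrightarrow> \<exists>b\<in>Arr B. Dom B b = y \<and> snd P b = d)
    \<Longrightarrow> d \<in> liftable_arrows B D P"
  by (simp add: liftable_arrows_def)

lemma liftable_arrowsD:
  "d \<in> liftable_arrows B D P \<Longrightarrow> y \<in> Obj B \<Longrightarrow> fst P y = Dom D d \<Longrightarrow>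
    \<exists>b\<in>Arr B. Dom B b = y \<and> snd P b = d"
  by (simp add: liftable_arrows_def)

lemma liftable_arrows_id:
  assumes P: "is_functor B D P" and x: "x \<in> Obj D"
  shows "Id D x \<in> liftable_arrows B D P"
proof (rule liftable_arrowsI)
  show "Id D x \<in> Arr D" by (rule cat_id[OF functor_cat_cod[OF P] x])
next
  fix y assume y: "y \<in> Obj B" and "fst P y = Dom D (Id D x)"
  then have "snd P (Id B y) = Id D x"
    using functor_id[OF P y] cat_id_dom[OF functor_cat_cod[OF P] x] by simp
  then show "\<exists>b\<in>Arr B. Dom B b = y \<and> snd P b = Id D x"
    using cat_id[OF functor_cat_dom[OF P] y] cat_id_dom[OF functor_cat_dom[OF P] y] by blast
qed

lemma liftable_arrows_comp:
  assumes P: "is_functor B D P" and f: "f \<in> liftable_arrows B D P"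
    and g: "g \<in> liftable_arrows B D P" and fg: "Cod D f = Dom D g"
  shows "Comp D g f \<in> liftable_arrows B D P"
proof -
  have B: "category B" and D: "category D"
    using P by (rule functor_cat_dom, rule functor_cat_cod)
  have fD: "f \<in> Arr D" and gD: "g \<in> Arr D"
    using f g by (simp_all add: liftable_arrows_def)
  show ?thesis
  proof (rule liftable_arrowsI)
    show "Comp D g f \<in> Arr D" by (rule cat_comp[OF D fD gD fg])
  next
    fix y assume y: "y \<in> Obj B" and "fst P y = Dom D (Comp D g f)"
    then have "fst P y = Dom D f" using cat_comp_dom[OF D fD gD fg] by simp
    then obtain b1 where b1: "b1 \<in> Arr B" "Dom B b1 = y" "snd P b1 = f"
      using liftable_arrowsD[OF f y] by blast
    have "fst P (Cod B b1) = Dom D g" using functor_cod[OF P b1(1)] b1(3) fg by simp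
    then obtain b2 where b2: "b2 \<in> Arr B" "Dom B b2 = Cod B b1" "snd P b2 = g"
      using liftable_arrowsD[OF g cat_cod[OF B b1(1)]] by blast
    have b12: "Cod B b1 = Dom B b2" using b2(2) by simp
    have "Comp B b2 b1 \<in> Arr B" "Dom B (Comp B b2 b1) = y" "snd P (Comp B b2 b1) = Comp D g f"
      using cat_comp[OF B b1(1) b2(1) b12] cat_comp_dom[OF B b1(1) b2(1) b12] b1(2)
        functor_comp[OF P b1(1) b2(1) b12] b1(3) b2(3) by simp_all
    then show "\<exists>b\<in>Arr B. Dom B b = y \<and> snd P b = Comp D g f" by blast
  qed
qed

lemma category_liftable_arrows:
  assumes P: "is_functor B D P"
  shows "category (D\<lparr>Arr := liftable_arrows B D P\<rparr>)"
proof (rule category_wide_subcategory)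
  show "category D" by (rule functor_cat_cod[OF P])
  show "liftable_arrows B D P \<subseteq> Arr D" by (auto simp: liftable_arrows_def)
qed (simp_all add: liftable_arrows_id[OF P] liftable_arrows_comp[OF P])

lemma discrete_opfibrationI:
  assumes P: "is_functor B D P" and lift: "Arr D \<subseteq> liftable_arrows B D P"
    and unique: "\<And>b b'. b \<in> Arr B \<Longrightarrow> b' \<in> Arr B \<Longrightarrow> Dom B b = Dom B b' \<Longrightarrow> snd P b = snd P b' \<Longrightarrow> b = b'"
  shows "discrete_opfibration B D P"
  unfolding discrete_opfibration_def
proof (intro conjI ballI impI P)
  fix y d assume y: "y \<in> Obj B" and d: "d \<in> Arr D" and "Dom D d = fst P y"
  then obtain b where b: "b \<in> Arr B" "Dom B b = y" "snd P b = d"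
    using liftable_arrowsD[of d B D P y] lift by auto
  show "\<exists>!b. b \<in> Arr B \<and> Dom B b = y \<and> snd P b = d"
    using b unique by (intro ex1I[of _ b]) auto
qed

section \<open>Pushouts\<close>

definition mediating ::
  "('bo, 'bm) cat \<Rightarrow> ('co, 'cm) cat \<Rightarrow> ('do, 'dm) cat \<Rightarrow> ('eo, 'em) cat \<Rightarrow>
   ('bo, 'bm, 'do, 'dm) cfunctor \<Rightarrow> ('co, 'cm, 'do, 'dm) cfunctor \<Rightarrow>
   ('bo, 'bm, 'eo, 'em) cfunctor \<Rightarrow> ('co, 'cm, 'eo, 'em) cfunctor \<Rightarrow>
   ('do, 'dm, 'eo, 'em) cfunctor \<Rightarrow> bool" where
  "mediating B C D E Fb Jb G H K \<longleftrightarrow> is_functor D E K \<and>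
     (\<forall>y\<in>Obj B. fst K (fst Fb y) = fst G y) \<and> (\<forall>b\<in>Arr B. snd K (snd Fb b) = snd G b) \<and>
     (\<forall>z\<in>Obj C. fst K (fst Jb z) = fst H z) \<and> (\<forall>c\<in>Arr C. snd K (snd Jb c) = snd H c)"

lemma pushout_wrt_cocone: "pushout_wrt A B C D J F Fb Jb T \<Longrightarrow> cocone A B C D J F Fb Jb"
  by (simp add: pushout_wrt_def)

lemma pushout_wrt_mediating:
  assumes "pushout_wrt A B C D J F Fb Jb TYPE('eo \<times> 'em)"
    and "cocone A B C (E :: ('eo, 'em) cat) J F G H"
  shows "\<exists>K. mediating B C D E Fb Jb G H K \<and>
    (\<forall>K'. mediating B C D E Fb Jb G H K' \<longrightarrow> (\<forall>h\<in>Arr D. snd K' h = snd K h))"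
proof -
  have "\<exists>K. mediating B C D E Fb Jb G H K \<and> (\<forall>K'. mediating B C D E Fb Jb G H K' \<longrightarrow>
      (\<forall>x\<in>Obj D. fst K' x = fst K x) \<and> (\<forall>h\<in>Arr D. snd K' h = snd K h))"
    using assms unfolding pushout_wrt_def mediating_def by simp
  then show ?thesis by blast
qed

lemma pushout_wrt_mediating_unique:
  assumes "pushout_wrt A B C D J F Fb Jb TYPE('eo \<times> 'em)"
    and "cocone A B C (E :: ('eo, 'em) cat) J F G H"
    and "mediating B C D E Fb Jb G H K1" "mediating B C D E Fb Jb G H K2" "h \<in> Arr D"
  shows "snd K1 h = snd K2 h"
  using pushout_wrt_mediating[OF assms(1,2)] assms(3-5) by metis

text \<open>The mediating functor into the subcategory is, by uniqueness, the identity of D.\<close>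

lemma pushout_wrt_arrows_generated:
  fixes D :: "('do, 'dm) cat"
  assumes po: "pushout_wrt A B C D J F Fb Jb TYPE('do \<times> 'dm)"
    and S: "S \<subseteq> Arr D" "category (D\<lparr>Arr := S\<rparr>)"
    and Fb_S: "snd Fb ` Arr B \<subseteq> S" and Jb_S: "snd Jb ` Arr C \<subseteq> S"
  shows "S = Arr D"
proof -
  let ?E = "D\<lparr>Arr := S\<rparr>"
  have coD: "cocone A B C D J F Fb Jb" by (rule pushout_wrt_cocone[OF po])
  have catD: "category D" using coD by (auto simp: cocone_def dest: functor_cat_cod)
  note restrict = is_functor_wide_subcategory_iff[OF catD S(2,1)]
  have coE: "cocone A B C ?E J F Fb Jb"
    using coD Fb_S Jb_S by (simp add: cocone_def restrict)
  obtain K where K: "mediating B C D ?E Fb Jb Fb Jb K"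
    using pushout_wrt_mediating[OF po coE] by blast
  have KD: "mediating B C D D Fb Jb Fb Jb K"
    using K by (simp add: mediating_def restrict)
  have idD: "mediating B C D D Fb Jb Fb Jb (id, id)"
    using coD catD by (simp add: mediating_def cocone_def is_functor_id functor_obj functor_arr)
  have "Arr D \<subseteq> S"
  proof
    fix h assume h: "h \<in> Arr D"
    have "snd K h \<in> S"
      using K h functor_arr[of D ?E K h] by (simp add: mediating_def)
    moreover have "snd K h = h"
      using pushout_wrt_mediating_unique[OF po coD KD idD h] by simp
    ultimately show "h \<in> S" by simp
  qed
  with S(1) show ?thesis by blast
qed

section \<open>Gluing C onto B along a cosieve\<close>

locale cosieve_opfibration_span =
  fixes A :: "('ao, 'am) cat" and B :: "('bo, 'bm) cat" and C :: "('co, 'cm) cat"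
    and F :: "('ao, 'am, 'co, 'cm) cfunctor" and J :: "('ao, 'am, 'bo, 'bm) cfunctor"
  assumes F_dopf: "discrete_opfibration A C F" and J_cosieve: "cosieve A B J"
begin

lemma J_dopf: "discrete_opfibration A B J"
  using J_cosieve by (simp add: cosieve_def)

lemmas F_functor = dopf_functor[OF F_dopf] and J_functor = dopf_functor[OF J_dopf]

lemma catA: "category A" and catB: "category B" and catC: "category C"
  using F_functor J_functor by (auto dest: functor_cat_dom functor_cat_cod)

abbreviation JA :: "'bo set" where "JA \<equiv> fst J ` Obj A"

definition jinv :: "'bo \<Rightarrow> 'ao" where "jinv y = inv_into (Obj A) (fst J) y"

lemma jinv_J [simp]: "a \<in> Obj A \<Longrightarrow> jinv (fst J a) = a"
  using J_cosieve by (simp add: jinv_def cosieve_def)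

lemma jinv_obj: "y \<in> JA \<Longrightarrow> jinv y \<in> Obj A"
  by (auto simp: jinv_def inv_into_into)

lemma J_jinv: "y \<in> JA \<Longrightarrow> fst J (jinv y) = y"
  unfolding jinv_def by (rule f_inv_into_f)

definition liftJ :: "'bm \<Rightarrow> 'am" where "liftJ b = dopf_lift A J b (jinv (Dom B b))"

lemma liftJ:
  assumes "b \<in> Arr B" "Dom B b \<in> JA"
  shows "liftJ b \<in> Arr A" "Dom A (liftJ b) = jinv (Dom B b)" "snd J (liftJ b) = b"
  using dopf_lift[OF J_dopf jinv_obj[OF assms(2)] assms(1)] J_jinv[OF assms(2)]
  by (simp_all add: liftJ_def)

lemma liftJ_J: "x \<in> Arr A \<Longrightarrow> liftJ (snd J x) = x"
  unfolding liftJ_def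
  by (rule dopf_lift_eqI[OF J_dopf]) (simp_all add: functor_dom[OF J_functor] cat_dom[OF catA])

lemma cod_in_JA: "b \<in> Arr B \<Longrightarrow> Dom B b \<in> JA \<Longrightarrow> Cod B b \<in> JA"
  using functor_cod[OF J_functor liftJ(1)] liftJ(3) cat_cod[OF catA liftJ(1)] by (metis imageI)

definition lift_to_B :: "'cm \<Rightarrow> 'bo \<Rightarrow> 'bm" where
  "lift_to_B c y = snd J (dopf_lift A F c (jinv y))"

context
  fixes c y assumes y: "y \<in> JA" and c: "c \<in> Arr C" "Dom C c = fst F (jinv y)"
begin

lemma lift_to_B_arr: "lift_to_B c y \<in> Arr B"
  and lift_to_B_dom: "Dom B (lift_to_B c y) = y"
  and lift_to_B_cod: "Cod B (lift_to_B c y) = fst J (Cod A (dopf_lift A F c (jinv y)))"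
  using dopf_lift[OF F_dopf jinv_obj[OF y] c(1) c(2)] J_jinv[OF y]
  by (simp_all add: lift_to_B_def functor_arr[OF J_functor] functor_dom[OF J_functor]
      functor_cod[OF J_functor])

lemma lift_to_B_cod_in_JA: "Cod B (lift_to_B c y) \<in> JA"
  and F_jinv_cod_lift_to_B: "fst F (jinv (Cod B (lift_to_B c y))) = Cod C c"
proof -
  note x = dopf_lift[OF F_dopf jinv_obj[OF y] c(1) c(2)]
  show "Cod B (lift_to_B c y) \<in> JA" "fst F (jinv (Cod B (lift_to_B c y))) = Cod C c"
    using functor_cod[OF F_functor x(1)] x by (simp_all add: lift_to_B_cod cat_cod[OF catA])
qed

lemma lift_to_B_comp:
  assumes c': "c' \<in> Arr C" "Cod C c = Dom C c'"
  shows "lift_to_B (Comp C c' c) y = Comp B (lift_to_B c' (Cod B (lift_to_B c y))) (lift_to_B c y)"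
proof -
  let ?x = "dopf_lift A F c (jinv y)"
  note x = dopf_lift[OF F_dopf jinv_obj[OF y] c(1) c(2)]
  have "Dom C c' = fst F (Cod A ?x)"
    using functor_cod[OF F_functor x(1)] x(3) c'(2) by simp
  note x' = dopf_lift[OF F_dopf cat_cod[OF catA x(1)] c'(1) this]
  let ?x' = "dopf_lift A F c' (Cod A ?x)"
  have e: "Cod A ?x = Dom A ?x'" using x'(2) by simp
  have cod: "jinv (Cod B (lift_to_B c y)) = Cod A ?x"
    by (simp add: lift_to_B_cod cat_cod[OF catA x(1)])
  have "lift_to_B (Comp C c' c) y = snd J (Comp A ?x' ?x)"
    unfolding lift_to_B_def
    using dopf_lift_comp[OF F_dopf jinv_obj[OF y] c(1) c'(1) c(2) c'(2)] by simp
  also have "\<dots> = Comp B (snd J ?x') (snd J ?x)"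
    by (rule functor_comp[OF J_functor x(1) x'(1) e])
  also have "\<dots> = Comp B (lift_to_B c' (Cod B (lift_to_B c y))) (lift_to_B c y)"
    unfolding lift_to_B_def cod[unfolded lift_to_B_def] ..
  finally show ?thesis .
qed

end

lemma lift_to_B_id: "y \<in> JA \<Longrightarrow> lift_to_B (Id C (fst F (jinv y))) y = Id B y"
  using dopf_lift_id[OF F_dopf jinv_obj] functor_id[OF J_functor jinv_obj] J_jinv
  by (simp add: lift_to_B_def)

lemma lift_to_B_F: "x \<in> Arr A \<Longrightarrow> lift_to_B (snd F x) (fst J (Dom A x)) = snd J x"
  using dopf_lift_eqI[OF F_dopf] cat_dom[OF catA] by (simp add: lift_to_B_def)

text \<open>The glued category is the pushout of J and F built by hand. Its objects and arrows are
  wrapped as singletons {x} and {[m]}, so that it lives in the types for which is_pushout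
  demands the universal property.\<close>

definition glue_obj :: "'bo \<Rightarrow> ('bo + 'co) set" where
  "glue_obj y = (if y \<in> JA then {Inr (fst F (jinv y))} else {Inl y})"

definition glue_arr :: "'bm \<Rightarrow> ('bm + 'cm) list set" where
  "glue_arr b = (if Dom B b \<in> JA then {[Inr (snd F (liftJ b))]} else {[Inl b]})"

definition glued_comp :: "'bm + 'cm \<Rightarrow> 'bm + 'cm \<Rightarrow> 'bm + 'cm" where
  "glued_comp u v = (case (u, v) of
      (Inl b', Inl b) \<Rightarrow> Inl (Comp B b' b)
    | (Inr c, Inl b) \<Rightarrow> Inl (Comp B (lift_to_B c (Cod B b)) b)
    | (Inr c', Inr c) \<Rightarrow> Inr (Comp C c' c)
    | (Inl b, Inr c) \<Rightarrow> Inl b)"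

definition glued :: "(('bo + 'co) set, ('bm + 'cm) list set) cat" where
  "glued = \<lparr>Obj = (\<lambda>y. {Inl y}) ` (Obj B - JA) \<union> (\<lambda>z. {Inr z}) ` Obj C,
     Arr = (\<lambda>b. {[Inl b]}) ` {b \<in> Arr B. Dom B b \<notin> JA} \<union> (\<lambda>c. {[Inr c]}) ` Arr C,
     Dom = (\<lambda>m. case hd (the_elem m) of Inl b \<Rightarrow> {Inl (Dom B b)} | Inr c \<Rightarrow> {Inr (Dom C c)}),
     Cod = (\<lambda>m. case hd (the_elem m) of Inl b \<Rightarrow> glue_obj (Cod B b) | Inr c \<Rightarrow> {Inr (Cod C c)}),
     Id = (\<lambda>x. case the_elem x of Inl y \<Rightarrow> {[Inl (Id B y)]} | Inr z \<Rightarrow> {[Inr (Id C z)]}),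
     Comp = (\<lambda>g f. {[glued_comp (hd (the_elem g)) (hd (the_elem f))]})\<rparr>"

lemma glued_simps [simp]:
  "{Inl y} \<in> Obj glued \<longleftrightarrow> y \<in> Obj B \<and> y \<notin> JA"
  "{Inr z} \<in> Obj glued \<longleftrightarrow> z \<in> Obj C"
  "{[Inl b]} \<in> Arr glued \<longleftrightarrow> b \<in> Arr B \<and> Dom B b \<notin> JA"
  "{[Inr c]} \<in> Arr glued \<longleftrightarrow> c \<in> Arr C"
  "Dom glued {[Inl b]} = {Inl (Dom B b)}"
  "Dom glued {[Inr c]} = {Inr (Dom C c)}"
  "Cod glued {[Inl b]} = glue_obj (Cod B b)"
  "Cod glued {[Inr c]} = {Inr (Cod C c)}"
  "Id glued {Inl y} = {[Inl (Id B y)]}"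
  "Id glued {Inr z} = {[Inr (Id C z)]}"
  "Comp glued {[Inl b']} {[Inl b]} = {[Inl (Comp B b' b)]}"
  "Comp glued {[Inr c]} {[Inl b]} = {[Inl (Comp B (lift_to_B c (Cod B b)) b)]}"
  "Comp glued {[Inr c']} {[Inr c]} = {[Inr (Comp C c' c)]}"
  by (auto simp: glued_def glued_comp_def)

lemma glued_arrE:
  assumes "m \<in> Arr glued"
  obtains (B) b where "m = {[Inl b]}" "b \<in> Arr B" "Dom B b \<notin> JA"
    | (C) c where "m = {[Inr c]}" "c \<in> Arr C"
  using assms by (auto simp: glued_def)

lemma glued_objE:
  assumes "x \<in> Obj glued"
  obtains (B) y where "x = {Inl y}" "y \<in> Obj B" "y \<notin> JA"
    | (C) z where "x = {Inr z}" "z \<in> Obj C"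
  using assms by (auto simp: glued_def)

lemma glue_obj_eq_Inl: "glue_obj y = {Inl y'} \<longleftrightarrow> y \<notin> JA \<and> y = y'"
  and glue_obj_eq_Inr: "glue_obj y = {Inr z} \<longleftrightarrow> y \<in> JA \<and> fst F (jinv y) = z"
  by (auto simp: glue_obj_def)

lemma glue_obj_in_glued: "y \<in> Obj B \<Longrightarrow> glue_obj y \<in> Obj glued"
  using functor_obj[OF F_functor jinv_obj] by (auto simp: glue_obj_def)

lemma glue_obj_cod_lift_to_B:
  "y \<in> JA \<Longrightarrow> c \<in> Arr C \<Longrightarrow> Dom C c = fst F (jinv y) \<Longrightarrow>
    glue_obj (Cod B (lift_to_B c y)) = {Inr (Cod C c)}"
  by (simp add: glue_obj_eq_Inr lift_to_B_cod_in_JA F_jinv_cod_lift_to_B)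

lemma glued_dom_obj: "m \<in> Arr glued \<Longrightarrow> Dom glued m \<in> Obj glued"
  by (erule glued_arrE) (simp_all add: cat_dom[OF catB] cat_dom[OF catC])

lemma glued_cod_obj: "m \<in> Arr glued \<Longrightarrow> Cod glued m \<in> Obj glued"
  by (erule glued_arrE) (simp_all add: glue_obj_in_glued cat_cod[OF catB] cat_cod[OF catC])

lemma glued_id:
  assumes "x \<in> Obj glued"
  shows "Id glued x \<in> Arr glued" "Dom glued (Id glued x) = x" "Cod glued (Id glued x) = x"
  using assms
  by (cases rule: glued_objE;
      simp add: glue_obj_def cat_id[OF catB] cat_id_dom[OF catB] cat_id_cod[OF catB]
        cat_id[OF catC] cat_id_dom[OF catC] cat_id_cod[OF catC])+

lemma glued_comp_closed:
  assumes f: "f \<in> Arr glued" and g: "g \<in> Arr glued" and fg: "Cod glued f = Dom glued g"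
  shows "Comp glued g f \<in> Arr glued \<and> Dom glued (Comp glued g f) = Dom glued f
    \<and> Cod glued (Comp glued g f) = Cod glued g"
  using f
proof (cases rule: glued_arrE)
  case f': (B b)
  show ?thesis using g
  proof (cases rule: glued_arrE)
    case (B b')
    with f' fg have e: "Cod B b = Dom B b'" by (simp add: glue_obj_eq_Inl)
    show ?thesis using f' B cat_comp[OF catB _ _ e] cat_comp_dom[OF catB _ _ e]
        cat_comp_cod[OF catB _ _ e] by simp
  next
    case (C c)
    with f' fg have e: "Cod B b \<in> JA" "Dom C c = fst F (jinv (Cod B b))"
      by (simp_all add: glue_obj_eq_Inr)
    note l = lift_to_B_arr[OF e(1) C(2) e(2)] lift_to_B_dom[OF e(1) C(2) e(2)]
    show ?thesis using f' C l cat_comp[OF catB f'(2) l(1)] cat_comp_dom[OF catB f'(2) l(1)]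
        cat_comp_cod[OF catB f'(2) l(1)] glue_obj_cod_lift_to_B[OF e(1) C(2) e(2)] by simp
  qed
next
  case f': (C c)
  show ?thesis using g
  proof (cases rule: glued_arrE)
    case (B b)
    with f' fg show ?thesis by simp
  next
    case (C c')
    with f' fg have e: "Cod C c = Dom C c'" by simp
    show ?thesis using f' C cat_comp[OF catC _ _ e] cat_comp_dom[OF catC _ _ e]
        cat_comp_cod[OF catC _ _ e] by simp
  qed
qed

lemma glued_idr: "f \<in> Arr glued \<Longrightarrow> Comp glued f (Id glued (Dom glued f)) = f"
  by (erule glued_arrE) (simp_all add: cat_idr[OF catB] cat_idr[OF catC])

lemma glued_idl:
  assumes "f \<in> Arr glued"
  shows "Comp glued (Id glued (Cod glued f)) f = f"
  using assms
proof (cases rule: glued_arrE)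
  case (B b)
  then show ?thesis
    using lift_to_B_id[of "Cod B b"] by (simp add: glue_obj_def cat_idl[OF catB])
next
  case (C c)
  then show ?thesis by (simp add: cat_idl[OF catC])
qed

lemma glued_assoc_BBC:
  assumes b: "b \<in> Arr B" "b' \<in> Arr B" "Cod B b = Dom B b'"
    and c: "Cod B b' \<in> JA" "c \<in> Arr C" "Dom C c = fst F (jinv (Cod B b'))"
  shows "Comp glued {[Inr c]} (Comp glued {[Inl b']} {[Inl b]})
    = Comp glued (Comp glued {[Inr c]} {[Inl b']}) {[Inl b]}"
  using cat_assoc[OF catB b(1,2) lift_to_B_arr[OF c] b(3) lift_to_B_dom[OF c, symmetric]]
  by (simp add: cat_comp_cod[OF catB b])

lemma glued_assoc_BCC:
  assumes b: "b \<in> Arr B" "Cod B b \<in> JA"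
    and c: "c \<in> Arr C" "Dom C c = fst F (jinv (Cod B b))" "c' \<in> Arr C" "Cod C c = Dom C c'"
  shows "Comp glued {[Inr c']} (Comp glued {[Inr c]} {[Inl b]})
    = Comp glued (Comp glued {[Inr c']} {[Inr c]}) {[Inl b]}"
proof -
  let ?l = "lift_to_B c (Cod B b)"
  have l: "?l \<in> Arr B" "Cod B b = Dom B ?l" "Cod B ?l \<in> JA" "Dom C c' = fst F (jinv (Cod B ?l))"
    using lift_to_B_arr[OF b(2) c(1,2)] lift_to_B_dom[OF b(2) c(1,2)]
      lift_to_B_cod_in_JA[OF b(2) c(1,2)] F_jinv_cod_lift_to_B[OF b(2) c(1,2)] c(4) by simp_all
  note l' = lift_to_B_arr[OF l(3) c(3) l(4)] lift_to_B_dom[OF l(3) c(3) l(4)]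
  show ?thesis
    using cat_assoc[OF catB b(1) l(1) l'(1) l(2) l'(2)[symmetric]]
    by (simp add: cat_comp_cod[OF catB b(1) l(1,2)] lift_to_B_comp[OF b(2) c])
qed

lemma glued_assoc:
  assumes f: "f \<in> Arr glued" and g: "g \<in> Arr glued" and h: "h \<in> Arr glued"
    and fg: "Cod glued f = Dom glued g" and gh: "Cod glued g = Dom glued h"
  shows "Comp glued h (Comp glued g f) = Comp glued (Comp glued h g) f"
proof -
  consider
      (BBB) b b' b'' where "f = {[Inl b]}" "g = {[Inl b']}" "h = {[Inl b'']}"
    | (BBC) b b' c where "f = {[Inl b]}" "g = {[Inl b']}" "h = {[Inr c]}"
    | (BCC) b c c' where "f = {[Inl b]}" "g = {[Inr c]}" "h = {[Inr c']}"
    | (CCC) c c' c'' where "f = {[Inr c]}" "g = {[Inr c']}" "h = {[Inr c'']}"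
    using f g h fg gh
    by (elim glued_arrE) auto
  then show ?thesis
  proof cases
    case BBB
    then show ?thesis using f g h fg gh
      by (simp add: glue_obj_eq_Inl cat_assoc[OF catB])
  next
    case BBC
    with f g h fg gh have "b \<in> Arr B" "b' \<in> Arr B" "Cod B b = Dom B b'"
      "Cod B b' \<in> JA" "c \<in> Arr C" "Dom C c = fst F (jinv (Cod B b'))"
      by (auto simp: glue_obj_eq_Inl glue_obj_eq_Inr)
    then show ?thesis unfolding BBC by (rule glued_assoc_BBC)
  next
    case BCC
    with f g h fg gh have "b \<in> Arr B" "Cod B b \<in> JA" "c \<in> Arr C"
      "Dom C c = fst F (jinv (Cod B b))" "c' \<in> Arr C" "Cod C c = Dom C c'"
      by (auto simp: glue_obj_eq_Inr)
    then show ?thesis unfolding BCC by (rule glued_assoc_BCC)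
  next
    case CCC
    then show ?thesis using f g h fg gh
      by (simp add: cat_assoc[OF catC])
  qed
qed

lemma category_glued: "category glued"
  unfolding category_def
  by (intro conjI ballI impI)
    (simp_all add: glued_dom_obj glued_cod_obj glued_id glued_comp_closed glued_idr glued_idl
      glued_assoc)

definition glue_B :: "('bo, 'bm, ('bo + 'co) set, ('bm + 'cm) list set) cfunctor" where
  "glue_B = (glue_obj, glue_arr)"

definition glue_C :: "('co, 'cm, ('bo + 'co) set, ('bm + 'cm) list set) cfunctor" where
  "glue_C = (\<lambda>z. {Inr z}, \<lambda>c. {[Inr c]})"

lemma glue_arr_in_glued:
  assumes b: "b \<in> Arr B"
  shows "glue_arr b \<in> Arr glued \<and> Dom glued (glue_arr b) = glue_obj (Dom B b)
    \<and> Cod glued (glue_arr b) = glue_obj (Cod B b)"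
proof (cases "Dom B b \<in> JA")
  case True
  note x = liftJ[OF b True]
  have "Cod B b = fst J (Cod A (liftJ b))"
    using functor_cod[OF J_functor x(1)] x(3) by simp
  then show ?thesis
    using True x functor_arr[OF F_functor x(1)] functor_dom[OF F_functor x(1)]
      functor_cod[OF F_functor x(1)] cat_cod[OF catA x(1)]
    by (simp add: glue_arr_def glue_obj_def)
next
  case False
  then show ?thesis using b by (simp add: glue_arr_def glue_obj_def)
qed

lemma glue_arr_id: "y \<in> Obj B \<Longrightarrow> glue_arr (Id B y) = Id glued (glue_obj y)"
  using liftJ_J[OF cat_id[OF catA jinv_obj]] functor_id[OF J_functor jinv_obj]
    functor_id[OF F_functor jinv_obj] J_jinv
  by (simp add: glue_arr_def glue_obj_def cat_id_dom[OF catB])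

lemma glue_arr_comp:
  assumes f: "f \<in> Arr B" and g: "g \<in> Arr B" and fg: "Cod B f = Dom B g"
  shows "glue_arr (Comp B g f) = Comp glued (glue_arr g) (glue_arr f)"
proof -
  have dom: "Dom B (Comp B g f) = Dom B f" by (rule cat_comp_dom[OF catB f g fg])
  consider (from_JA) "Dom B f \<in> JA" | (into_JA) "Dom B f \<notin> JA" "Dom B g \<in> JA"
    | (outside_JA) "Dom B g \<notin> JA"
    using cod_in_JA[OF f] fg by auto
  then show ?thesis
  proof cases
    case from_JA
    then have g_JA: "Dom B g \<in> JA" using cod_in_JA[OF f] fg by simp
    note x = liftJ[OF f from_JA] and x' = liftJ[OF g g_JA]
    have e: "Cod A (liftJ f) = Dom A (liftJ g)"
      using x'(2) fg functor_cod[OF J_functor x(1)] x(3) cat_cod[OF catA x(1)] by simp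
    have "liftJ (Comp B g f) = Comp A (liftJ g) (liftJ f)"
      using liftJ_J[OF cat_comp[OF catA x(1) x'(1) e]] functor_comp[OF J_functor x(1) x'(1) e]
        x(3) x'(3) by simp
    then show ?thesis
      using from_JA g_JA dom functor_comp[OF F_functor x(1) x'(1) e] by (simp add: glue_arr_def)
  next
    case into_JA
    note x' = liftJ[OF g into_JA(2)]
    have "lift_to_B (snd F (liftJ g)) (Cod B f) = g"
      using lift_to_B_F[OF x'(1)] x' fg J_jinv[OF into_JA(2)] by simp
    then show ?thesis using into_JA dom by (simp add: glue_arr_def)
  next
    case outside_JA
    then show ?thesis using fg dom cod_in_JA[OF f] by (auto simp: glue_arr_def)
  qed
qed

lemma glue_B_functor: "is_functor B glued glue_B"
  unfolding is_functor_def glue_B_def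
  by (simp add: catB category_glued glue_obj_in_glued glue_arr_in_glued glue_arr_id glue_arr_comp)

lemma glue_C_functor: "is_functor C glued glue_C"
  unfolding is_functor_def glue_C_def
  by (simp add: catC category_glued cat_dom[OF catC] cat_cod[OF catC] cat_id[OF catC])

lemma glued_cocone: "cocone A B C glued J F glue_B glue_C"
  unfolding cocone_def
  using glue_B_functor glue_C_functor functor_dom[OF J_functor] cat_dom[OF catA] liftJ_J
  by (simp add: glue_B_def glue_C_def glue_obj_def glue_arr_def)

lemma glue_arr_inj:
  assumes b: "b \<in> Arr B" "b' \<in> Arr B" "Dom B b = Dom B b'" and eq: "glue_arr b = glue_arr b'"
  shows "b = b'"
proof (cases "Dom B b \<in> JA")
  case True
  note x = liftJ[OF b(1) True] and x' = liftJ[OF b(2) True[unfolded b(3)]]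
  have "snd F (liftJ b) = snd F (liftJ b')"
    using eq True b(3) by (simp add: glue_arr_def)
  then have "liftJ b = liftJ b'"
    using dopf_lift_eqI[OF F_dopf x(1)] dopf_lift_eqI[OF F_dopf x'(1)] x(2) x'(2) b(3) by metis
  then show ?thesis using x(3) x'(3) by metis
next
  case False
  then show ?thesis using eq b(3) by (simp add: glue_arr_def)
qed

end

locale cosieve_pushout = cosieve_opfibration_span A B C F J
  for A :: "('ao, 'am) cat" and B :: "('bo, 'bm) cat" and C :: "('co, 'cm) cat"
    and F :: "('ao, 'am, 'co, 'cm) cfunctor" and J :: "('ao, 'am, 'bo, 'bm) cfunctor" +
  fixes D :: "('do, 'dm) cat"
    and Fb :: "('bo, 'bm, 'do, 'dm) cfunctor" and Jb :: "('co, 'cm, 'do, 'dm) cfunctor"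
  assumes pushout: "is_pushout A B C D J F Fb Jb"
begin

lemma pushout_own_types: "pushout_wrt A B C D J F Fb Jb TYPE('do \<times> 'dm)"
  and pushout_glued_types: "pushout_wrt A B C D J F Fb Jb TYPE(('bo + 'co) set \<times> ('bm + 'cm) list set)"
  using pushout by (simp_all add: is_pushout_def)

lemma cocone_D: "cocone A B C D J F Fb Jb"
  by (rule pushout_wrt_cocone[OF pushout_own_types])

lemma Fb_functor: "is_functor B D Fb" and Jb_functor: "is_functor C D Jb"
  using cocone_D by (simp_all add: cocone_def)

lemma Fb_J_arr: "a \<in> Arr A \<Longrightarrow> snd Fb (snd J a) = snd Jb (snd F a)"
  using cocone_D by (simp add: cocone_def)

definition to_glued :: "('do, 'dm, ('bo + 'co) set, ('bm + 'cm) list set) cfunctor" where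
  "to_glued = (SOME K. mediating B C D glued Fb Jb glue_B glue_C K)"

lemma to_glued: "mediating B C D glued Fb Jb glue_B glue_C to_glued"
proof -
  have "\<exists>K. mediating B C D glued Fb Jb glue_B glue_C K"
    using pushout_wrt_mediating[OF pushout_glued_types glued_cocone] by blast
  then show ?thesis unfolding to_glued_def by (rule someI_ex)
qed

lemma glue_obj_eqI: "y \<in> Obj B \<Longrightarrow> y' \<in> Obj B \<Longrightarrow> fst Fb y = fst Fb y' \<Longrightarrow> glue_obj y = glue_obj y'"
  using to_glued unfolding mediating_def glue_B_def by (metis fst_conv)

lemma glue_obj_eq_InrI: "y \<in> Obj B \<Longrightarrow> z \<in> Obj C \<Longrightarrow> fst Fb y = fst Jb z \<Longrightarrow> glue_obj y = {Inr z}"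
  using to_glued unfolding mediating_def glue_B_def glue_C_def by (metis fst_conv)

lemma Fb_arr_inj:
  "b \<in> Arr B \<Longrightarrow> b' \<in> Arr B \<Longrightarrow> Dom B b = Dom B b' \<Longrightarrow> snd Fb b = snd Fb b' \<Longrightarrow> b = b'"
  using to_glued glue_arr_inj unfolding mediating_def glue_B_def by (metis snd_conv)

lemma Fb_lift_to_B:
  "y \<in> JA \<Longrightarrow> c \<in> Arr C \<Longrightarrow> Dom C c = fst F (jinv y) \<Longrightarrow> snd Fb (lift_to_B c y) = snd Jb c"
  using Fb_J_arr dopf_lift[OF F_dopf jinv_obj] by (simp add: lift_to_B_def)

lemma Jb_arr_liftable:
  assumes c: "c \<in> Arr C"
  shows "snd Jb c \<in> liftable_arrows B D Fb"
proof (rule liftable_arrowsI)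
  show "snd Jb c \<in> Arr D" by (rule functor_arr[OF Jb_functor c])
next
  fix y assume y: "y \<in> Obj B" and "fst Fb y = Dom D (snd Jb c)"
  then have "glue_obj y = {Inr (Dom C c)}"
    using glue_obj_eq_InrI[OF y cat_dom[OF catC c]] functor_dom[OF Jb_functor c] by simp
  then have l: "y \<in> JA" "Dom C c = fst F (jinv y)" by (simp_all add: glue_obj_eq_Inr)
  show "\<exists>b\<in>Arr B. Dom B b = y \<and> snd Fb b = snd Jb c"
    using lift_to_B_arr[OF l(1) c l(2)] lift_to_B_dom[OF l(1) c l(2)] Fb_lift_to_B[OF l(1) c l(2)]
    by blast
qed

lemma Fb_arr_liftable:
  assumes b: "b \<in> Arr B"
  shows "snd Fb b \<in> liftable_arrows B D Fb"
proof (cases "Dom B b \<in> JA")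
  case True
  note x = liftJ[OF b True]
  have "snd Fb b = snd Jb (snd F (liftJ b))" using Fb_J_arr[OF x(1)] x(3) by simp
  then show ?thesis using Jb_arr_liftable[OF functor_arr[OF F_functor x(1)]] by simp
next
  case False
  show ?thesis
  proof (rule liftable_arrowsI)
    show "snd Fb b \<in> Arr D" by (rule functor_arr[OF Fb_functor b])
  next
    fix y assume y: "y \<in> Obj B" and "fst Fb y = Dom D (snd Fb b)"
    then have "glue_obj y = glue_obj (Dom B b)"
      using glue_obj_eqI[OF y cat_dom[OF catB b]] functor_dom[OF Fb_functor b] by simp
    then have "y = Dom B b" using False by (simp add: glue_obj_def split: if_splits)
    then show "\<exists>b'\<in>Arr B. Dom B b' = y \<and> snd Fb b' = snd Fb b" using b by blast
  qed
qed

end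

theorem theorem5p2:
  fixes A :: "('ao, 'am) cat" and B :: "('bo, 'bm) cat"
    and C :: "('co, 'cm) cat" and D :: "('do, 'dm) cat"
    and F :: "('ao, 'am, 'co, 'cm) cfunctor" and J :: "('ao, 'am, 'bo, 'bm) cfunctor"
    and Fb :: "('bo, 'bm, 'do, 'dm) cfunctor" and Jb :: "('co, 'cm, 'do, 'dm) cfunctor"
  assumes "discrete_opfibration A C F"
    and "cosieve A B J"
    and "is_pushout A B C D J F Fb Jb"
  shows "discrete_opfibration B D Fb"
proof -
  interpret cosieve_pushout A B C F J D Fb Jb
    using assms by unfold_locales
  have "liftable_arrows B D Fb = Arr D"
  proof (rule pushout_wrt_arrows_generated[OF pushout_own_types])
    show "liftable_arrows B D Fb \<subseteq> Arr D" by (auto simp: liftable_arrows_def)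
    show "category (D\<lparr>Arr := liftable_arrows B D Fb\<rparr>)"
      by (rule category_liftable_arrows[OF Fb_functor])
    show "snd Fb ` Arr B \<subseteq> liftable_arrows B D Fb" using Fb_arr_liftable by blast
    show "snd Jb ` Arr C \<subseteq> liftable_arrows B D Fb" using Jb_arr_liftable by blast
  qed
  then show ?thesis
    by (intro discrete_opfibrationI[OF Fb_functor _ Fb_arr_inj]) simp_all
qed

end
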